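(* Let $\mathcal{G}=(V,E,p)$ be an uncertain graph, $k,l_m,\theta$ positive integers, and $G_1,\dots,G_\theta$ independently sampled possible worlds. Let $V_1,\dots,V_k$ be the true top-$k$ node sets among those of size at least $l_m$ that are closed w.r.t. $\gamma$ (i.e. they are such closed sets with $\gamma(V_1)\ge\dots\ge\gamma(V_k)\ge\gamma(U)$ for every other closed set $U$ with $|U|\ge l_m$). For each $i$, let $\mathbf{G}(V_i)$ be the set of possible worlds $G$ of $\mathcal{G}$ such that $V_i$ is contained in some densest subgraph of $G$, and let $\mathbb{G}=\bigcup_{i=1}^k\mathbf{G}(V_i)$. Then $$\Pr\big(V_1,\dots,V_k\text{ are all closed w.r.t. }\widehat\gamma\big)\ \ge\ 1-\sum_{G\in\mathbb{G}}\big(1-\Pr(G)\big)^\theta.$$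
   Context: An uncertain graph $\mathcal{G}=(V,E,p)$ has finite node set $V$, undirected edge set $E$, and $p:E\to(0,1]$; a possible world $G=(V,E_G)$, $E_G\subseteq E$, has probability $\Pr(G)=\prod_{e\in E_G}p(e)\prod_{e\in E\setminus E_G}(1-p(e))$. Edge density: $\rho(G[W])=|E_G[W]|/|W|$ for nonempty $W\subseteq V$, with $E_G[W]$ the edges of $G$ inside $W$. A densest subgraph of $G$ is a nonempty $W\subseteq V$ maximizing $\rho(G[W])$. The densest subgraph containment probability of $U\subseteq V$ is $\gamma(U)=\sum_G\Pr(G)\cdot\mathbb{1}[\exists\,U'\supseteq U:\ U'\text{ is a densest subgraph of }G]$. Given independent samples $G_1,\dots,G_\theta$ drawn from $\Pr$, $\widehat\gamma(U)=\frac1\theta\#\{i: U\text{ is contained in some densest subgraph of }G_i\}$. A set $U\subseteq V$ is closed w.r.t. a function $f$ on subsets of $V$ if no proper superset $U'\supsetneq U$, $U'\subseteq V$, has $f(U')=f(U)$. *)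

theory Defs
  imports Complex_Main
begin

text \<open>Uncertain graph (V,E,p): finite node set V, undirected edges as 2-element subsets of V,
  edge probabilities in (0,1]. A possible world is a subset F of E.\<close>

definition uncertain_graph :: "'a set \<Rightarrow> 'a set set \<Rightarrow> ('a set \<Rightarrow> real) \<Rightarrow> bool" where
  "uncertain_graph V E p \<longleftrightarrow> finite V \<and> (\<forall>e\<in>E. e \<subseteq> V \<and> card e = 2) \<and>
     (\<forall>e\<in>E. 0 < p e \<and> p e \<le> 1)"

definition world_prob :: "'a set set \<Rightarrow> ('a set \<Rightarrow> real) \<Rightarrow> 'a set set \<Rightarrow> real" where
  "world_prob E p F = (\<Prod>e\<in>F. p e) * (\<Prod>e\<in>E - F. 1 - p e)"

definition density :: "'a set set \<Rightarrow> 'a set \<Rightarrow> real" where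
  "density F W = real (card {e\<in>F. e \<subseteq> W}) / real (card W)"

definition is_densest :: "'a set \<Rightarrow> 'a set set \<Rightarrow> 'a set \<Rightarrow> bool" where
  "is_densest V F W \<longleftrightarrow> W \<noteq> {} \<and> W \<subseteq> V \<and>
     (\<forall>W'. W' \<noteq> {} \<and> W' \<subseteq> V \<longrightarrow> density F W' \<le> density F W)"

definition in_densest :: "'a set \<Rightarrow> 'a set set \<Rightarrow> 'a set \<Rightarrow> bool" where
  "in_densest V F U \<longleftrightarrow> (\<exists>U'. U \<subseteq> U' \<and> is_densest V F U')"

definition gamma :: "'a set \<Rightarrow> 'a set set \<Rightarrow> ('a set \<Rightarrow> real) \<Rightarrow> 'a set \<Rightarrow> real" where
  "gamma V E p U = (\<Sum>F\<in>Pow E. world_prob E p F * (if in_densest V F U then 1 else 0))"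

definition gamma_hat :: "'a set \<Rightarrow> 'a set set list \<Rightarrow> 'a set \<Rightarrow> real" where
  "gamma_hat V ss U = real (card {i. i < length ss \<and> in_densest V (ss ! i) U}) / real (length ss)"

definition closed_wrt :: "'a set \<Rightarrow> ('a set \<Rightarrow> real) \<Rightarrow> 'a set \<Rightarrow> bool" where
  "closed_wrt V f U \<longleftrightarrow> U \<subseteq> V \<and> (\<forall>U'. U \<subset> U' \<and> U' \<subseteq> V \<longrightarrow> f U' \<noteq> f U)"

text \<open>Probability, over theta independent samples of worlds, of an event on the sample list.\<close>
definition sample_prob :: "'a set set \<Rightarrow> ('a set \<Rightarrow> real) \<Rightarrow> nat \<Rightarrow> ('a set set list \<Rightarrow> bool) \<Rightarrow> real" where
  "sample_prob E p \<theta> P = (\<Sum>ss\<in>{ss\<in>lists (Pow E). length ss = \<theta>}.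
      (\<Prod>i<\<theta>. world_prob E p (ss ! i)) * (if P ss then 1 else 0))"

end

theory Submission
  imports Defs
begin

text \<open>If a sample of worlds
  contains every world in which a \<open>gamma\<close>-closed set \<open>A\<close> lies in a densest subgraph, then \<open>A\<close> is
  also closed w.r.t. \<open>gamma_hat\<close>: any proper superset \<open>U'\<close> of \<open>A\<close> with \<open>gamma U' \<noteq> gamma A\<close> loses
  some such world, which then is a sampled world counting for \<open>A\<close> but not for \<open>U'\<close>. Hence the
  event of the theorem contains the event that all worlds of \<open>\<bbbG>\<close> are sampled, and a union
  bound over the worlds of \<open>\<bbbG>\<close>, each missed by \<open>\<theta>\<close> independent samples with probability
  \<open>(1 - Pr G)^\<theta>\<close>, gives the bound.\<close>

lemma sum_prod_lists_length:
  assumes "finite A"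
  shows "(\<Sum>ss\<in>{ss\<in>lists A. length ss = n}. \<Prod>i<n. f (ss ! i)) = (sum f A :: 'b::comm_semiring_1) ^ n"
proof (induction n)
  case 0
  have "{ss\<in>lists A. length ss = 0} = {[]}" by auto
  then show ?case by simp
next
  case (Suc n)
  let ?L = "{ss\<in>lists A. length ss = n}"
  have eq: "{ss\<in>lists A. length ss = Suc n} = (\<lambda>(a, xs). a # xs) ` (A \<times> ?L)"
    by (auto simp: length_Suc_conv image_iff)
  have inj: "inj_on (\<lambda>(a, xs). a # xs) (A \<times> ?L)"
    by (auto simp: inj_on_def)
  have "(\<Sum>ss\<in>{ss\<in>lists A. length ss = Suc n}. \<Prod>i<Suc n. f (ss ! i))
      = (\<Sum>(a, xs)\<in>A \<times> ?L. f a * (\<Prod>i<n. f (xs ! i)))"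
    unfolding eq
    by (subst sum.reindex[OF inj])
       (simp add: prod.lessThan_Suc_shift[of _ n] case_prod_unfold del: prod.lessThan_Suc)
  also have "\<dots> = sum f A * (\<Sum>xs\<in>?L. \<Prod>i<n. f (xs ! i))"
    by (simp add: sum_product sum.cartesian_product)
  finally show ?case using Suc by simp
qed

lemma uncertain_graph_finite_edges:
  assumes "uncertain_graph V E p"
  shows "finite E"
proof -
  have "E \<subseteq> Pow V" using assms by (auto simp: uncertain_graph_def)
  then show ?thesis using assms by (auto simp: uncertain_graph_def intro: finite_subset)
qed

lemma sum_world_prob_Pow:
  assumes "finite E"
  shows "(\<Sum>F\<in>Pow E. world_prob E p F) = 1"
  using prod_add[OF assms, of p "\<lambda>e. 1 - p e"] by (simp add: world_prob_def)

lemma world_prob_nonneg: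
  assumes "\<forall>e\<in>E. 0 \<le> p e \<and> p e \<le> 1" "F \<subseteq> E"
  shows "world_prob E p F \<ge> 0"
  unfolding world_prob_def using assms
  by (intro mult_nonneg_nonneg prod_nonneg) auto

lemma prod_world_prob_nonneg:
  assumes "\<forall>e\<in>E. 0 \<le> p e \<and> p e \<le> 1" "ss \<in> {ss\<in>lists (Pow E). length ss = \<theta>}"
  shows "0 \<le> (\<Prod>i<\<theta>. world_prob E p (ss ! i))"
  using assms by (intro prod_nonneg world_prob_nonneg) (auto simp: in_lists_conv_set)

lemma finite_sample_lists:
  assumes "finite E"
  shows "finite {ss\<in>lists (Pow E). length ss = \<theta>}"
  using finite_lists_length_eq[of "Pow E" \<theta>] assms
  by (simp add: in_lists_conv_set Ball_def subset_iff)

lemma sample_prob_True: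
  assumes "finite E"
  shows "sample_prob E p \<theta> (\<lambda>_. True) = 1"
  unfolding sample_prob_def
  using sum_prod_lists_length[OF finite_Pow_iff[THEN iffD2, OF assms], where n=\<theta> and f="world_prob E p"]
  by (simp add: sum_world_prob_Pow[OF assms])

lemma sample_prob_compl:
  assumes "finite E"
  shows "sample_prob E p \<theta> (\<lambda>ss. \<not> P ss) = 1 - sample_prob E p \<theta> P"
proof -
  have "sample_prob E p \<theta> (\<lambda>ss. \<not> P ss) + sample_prob E p \<theta> P = sample_prob E p \<theta> (\<lambda>_. True)"
    unfolding sample_prob_def sum.distrib[symmetric] by (intro sum.cong) auto
  then show ?thesis using sample_prob_True[OF assms] by simp
qed

lemma sample_prob_mono:
  assumes "\<forall>e\<in>E. 0 \<le> p e \<and> p e \<le> 1" "\<And>ss. length ss = \<theta> \<Longrightarrow> P ss \<Longrightarrow> Q ss"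
  shows "sample_prob E p \<theta> P \<le> sample_prob E p \<theta> Q"
  unfolding sample_prob_def
proof (intro sum_mono mult_left_mono)
  fix ss assume "ss \<in> {ss\<in>lists (Pow E). length ss = \<theta>}"
  then show "0 \<le> (\<Prod>i<\<theta>. world_prob E p (ss ! i))"
    by (rule prod_world_prob_nonneg[OF assms(1)])
qed (use assms(2) in auto)

lemma sample_prob_Bex_le:
  assumes "\<forall>e\<in>E. 0 \<le> p e \<and> p e \<le> 1" "finite G"
  shows "sample_prob E p \<theta> (\<lambda>ss. \<exists>x\<in>G. P x ss) \<le> (\<Sum>x\<in>G. sample_prob E p \<theta> (P x))"
proof -
  let ?w = "\<lambda>ss. \<Prod>i<\<theta>. world_prob E p (ss ! i)"
  let ?S = "{ss\<in>lists (Pow E). length ss = \<theta>}"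
  have "sample_prob E p \<theta> (\<lambda>ss. \<exists>x\<in>G. P x ss)
      \<le> (\<Sum>ss\<in>?S. ?w ss * (\<Sum>x\<in>G. if P x ss then 1 else 0))"
    unfolding sample_prob_def
  proof (intro sum_mono mult_left_mono)
    fix ss assume "ss \<in> ?S"
    then show "0 \<le> ?w ss" by (rule prod_world_prob_nonneg[OF assms(1)])
    show "(if \<exists>x\<in>G. P x ss then 1 else 0) \<le> (\<Sum>x\<in>G. if P x ss then 1 else 0 :: real)"
    proof (cases "\<exists>x\<in>G. P x ss")
      case True
      then obtain x where "x \<in> G" "P x ss" by blast
      then have "(if P x ss then 1 else 0) \<le> (\<Sum>x\<in>G. if P x ss then 1 else 0 :: real)"
        using assms(2) by (intro member_le_sum) auto
      with \<open>P x ss\<close> True show ?thesis by simp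
    qed (simp add: sum_nonneg)
  qed
  also have "\<dots> = (\<Sum>x\<in>G. sample_prob E p \<theta> (P x))"
    unfolding sample_prob_def sum_distrib_left by (rule sum.swap)
  finally show ?thesis .
qed

lemma sample_prob_not_sampled:
  assumes "finite E" "F \<in> Pow E"
  shows "sample_prob E p \<theta> (\<lambda>ss. F \<notin> set ss) = (1 - world_prob E p F) ^ \<theta>"
proof -
  let ?w = "\<lambda>ss. \<Prod>i<\<theta>. world_prob E p (ss ! i)"
  let ?S = "{ss\<in>lists (Pow E). length ss = \<theta>}"
  have "sample_prob E p \<theta> (\<lambda>ss. F \<notin> set ss) = (\<Sum>ss\<in>{ss\<in>?S. F \<notin> set ss}. ?w ss)"
    unfolding sample_prob_def sum.inter_filter[OF finite_sample_lists[OF assms(1)]]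
    by (intro sum.cong) auto
  also have "{ss\<in>?S. F \<notin> set ss} = {ss\<in>lists (Pow E - {F}). length ss = \<theta>}"
    by (auto simp: in_lists_conv_set)
  also have "(\<Sum>ss\<in>\<dots>. ?w ss) = (sum (world_prob E p) (Pow E - {F})) ^ \<theta>"
    using assms(1) by (intro sum_prod_lists_length) auto
  also have "sum (world_prob E p) (Pow E - {F}) = 1 - world_prob E p F"
    using sum_world_prob_Pow[OF assms(1), of p] assms by (simp add: sum_diff1)
  finally show ?thesis .
qed

lemma closed_wrt_gamma_hat_if_witnesses_sampled:
  assumes "ss \<noteq> []"
    and closed: "closed_wrt V (gamma V E p) A"
    and sampled: "\<forall>F\<in>Pow E. in_densest V F A \<longrightarrow> F \<in> set ss"
  shows "closed_wrt V (gamma_hat V ss) A"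
  unfolding closed_wrt_def
proof (intro conjI allI impI)
  show "A \<subseteq> V" using closed by (simp add: closed_wrt_def)
  fix U' assume U': "A \<subset> U' \<and> U' \<subseteq> V"
  have witness_mono: "\<And>F. in_densest V F U' \<Longrightarrow> in_densest V F A"
    using U' unfolding in_densest_def by blast
  obtain F where F: "F \<in> Pow E" "in_densest V F A" "\<not> in_densest V F U'"
  proof (rule ccontr)
    assume "\<not> thesis"
    then have "\<forall>F\<in>Pow E. in_densest V F U' = in_densest V F A"
      using that witness_mono by blast
    then have "gamma V E p U' = gamma V E p A"
      unfolding gamma_def by (intro sum.cong) auto
    with closed U' show False by (simp add: closed_wrt_def)
  qed
  then obtain j where j: "j < length ss" "ss ! j = F"
    using sampled by (auto simp: in_set_conv_nth)
  have "{i. i < length ss \<and> in_densest V (ss ! i) U'} \<subset> {i. i < length ss \<and> in_densest V (ss ! i) A}"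
    using witness_mono j F by auto
  then have "card {i. i < length ss \<and> in_densest V (ss ! i) U'}
           < card {i. i < length ss \<and> in_densest V (ss ! i) A}"
    by (intro psubset_card_mono) auto
  then show "gamma_hat V ss U' \<noteq> gamma_hat V ss A"
    unfolding gamma_hat_def using \<open>ss \<noteq> []\<close> by (simp add: divide_right_mono)
qed

theorem theorem4:
  fixes V :: "'a set" and E :: "'a set set" and p :: "'a set \<Rightarrow> real"
    and k lm \<theta> :: nat and Vs :: "nat \<Rightarrow> 'a set"
  assumes ug: "uncertain_graph V E p"
    and pos: "k > 0" "lm > 0" "\<theta> > 0"
    and top_closed: "\<forall>i<k. closed_wrt V (gamma V E p) (Vs i) \<and> card (Vs i) \<ge> lm"
    and top_distinct: "inj_on Vs {..<k}"
    and top_sorted: "\<forall>i j. i \<le> j \<and> j < k \<longrightarrow> gamma V E p (Vs j) \<le> gamma V E p (Vs i)"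
    and top_max: "\<forall>U. closed_wrt V (gamma V E p) U \<and> card U \<ge> lm \<and> U \<notin> Vs ` {..<k}
                     \<longrightarrow> gamma V E p U \<le> gamma V E p (Vs (k - 1))"
  shows "sample_prob E p \<theta> (\<lambda>ss. \<forall>i<k. closed_wrt V (gamma_hat V ss) (Vs i))
         \<ge> 1 - (\<Sum>F\<in>(\<Union>i<k. {F\<in>Pow E. in_densest V F (Vs i)}). (1 - world_prob E p F) ^ \<theta>)"
proof -
  define GG where "GG = (\<Union>i<k. {F\<in>Pow E. in_densest V F (Vs i)})"
  have finE: "finite E" using uncertain_graph_finite_edges[OF ug] .
  have prob: "\<forall>e\<in>E. 0 \<le> p e \<and> p e \<le> 1" using ug by (auto simp: uncertain_graph_def)
  have finGG: "finite GG" and GG_Pow: "GG \<subseteq> Pow E" using finE by (auto simp: GG_def)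
  have "1 - (\<Sum>F\<in>GG. (1 - world_prob E p F) ^ \<theta>)
      = 1 - (\<Sum>F\<in>GG. sample_prob E p \<theta> (\<lambda>ss. F \<notin> set ss))"
    using GG_Pow by (simp add: sample_prob_not_sampled[OF finE] subset_iff)
  also have "\<dots> \<le> 1 - sample_prob E p \<theta> (\<lambda>ss. \<exists>F\<in>GG. F \<notin> set ss)"
    using sample_prob_Bex_le[OF prob finGG] by simp
  also have "\<dots> = sample_prob E p \<theta> (\<lambda>ss. \<forall>F\<in>GG. F \<in> set ss)"
    using sample_prob_compl[OF finE, where P="\<lambda>ss. \<forall>F\<in>GG. F \<in> set ss"] by simp
  also have "\<dots> \<le> sample_prob E p \<theta> (\<lambda>ss. \<forall>i<k. closed_wrt V (gamma_hat V ss) (Vs i))"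
  proof (rule sample_prob_mono[OF prob])
    fix ss assume "length ss = \<theta>" and "\<forall>F\<in>GG. F \<in> set ss"
    then show "\<forall>i<k. closed_wrt V (gamma_hat V ss) (Vs i)"
      using pos(3) top_closed
      by (auto intro!: closed_wrt_gamma_hat_if_witnesses_sampled simp: GG_def)
  qed
  finally show ?thesis unfolding GG_def .
qed

end
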